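(* Let $f(u,\bar u)=\sum_{\nu,\mu}c_{\nu,\mu}u^\nu\bar u^\mu$ be a mixed polynomial in one complex variable $u$. (1) If $f$ is admissible at infinity and its zero set $V(f)=\{\alpha\in\mathbb C: f(\alpha,\bar\alpha)=0\}$ is finite, then $\operatorname{SM}(f)=\beta(f)$. (2) If $f$ is admissible at the origin and $f(0,0)=0$, then $\operatorname{sm}(f,0)=\rho(f,0)$.
   Context: Let $\bar d=\max\{\nu+\mu: c_{\nu,\mu}\ne0\}$ and $\underline d=\min\{\nu+\mu:c_{\nu,\mu}\ne0\}$, and for $\ell\ge0$ let $f_\ell=\sum_{\nu+\mu=\ell}c_{\nu,\mu}u^\nu\bar u^\mu$. There are unique factorizations $f_{\bar d}(u,\bar u)=c\,u^p\bar u^q\prod_{j=1}^s(u+\gamma_j\bar u)^{\nu_j}$ with $c\ne0$, $p,q\ge0$, $\nu_j\ge1$, $p+q+\sum\nu_j=\bar d$, and $\gamma_1,\dots,\gamma_s$ distinct non-zero complex numbers; and $f_{\underline d}(u,\bar u)=c'u^{a}\bar u^{b}\prod_{j=1}^{s'}(u+\delta_j\bar u)^{\mu_j}$ with $c'\ne0$, $a+b+\sum\mu_j=\underline d$, $\delta_1,\dots,\delta_{s'}$ distinct non-zero complex numbers. $f$ is admissible at infinity if $|\gamma_j|\ne1$ for all $j$, and admissible at the origin if $|\delta_j|\ne1$ for all $j$. For non-zero $\xi\in\mathbb C$ let $\varepsilon(\xi)=1$ if $|\xi|<1$, $0$ if $|\xi|=1$, $-1$ if $|\xi|>1$. Define $\beta(f)=p-q+\sum_{j=1}^s\varepsilon(\gamma_j)\nu_j$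 and $\rho(f,0)=a-b+\sum_{j=1}^{s'}\varepsilon(\delta_j)\mu_j$. For an isolated root $\alpha$ of $f$, $\operatorname{sm}(f,\alpha)$ is the mapping degree of $f/|f|:\{|u-\alpha|=r\}\to S^1$ for small $r>0$ (circle oriented counterclockwise), and $\operatorname{SM}(f)=\sum_{\alpha\in V(f)}\operatorname{sm}(f,\alpha)$. *)

theory Defs
  imports "HOL-Complex_Analysis.Complex_Analysis"
begin

text \<open>A mixed polynomial f(u, conj u) = sum c_{nu,mu} u^nu (conj u)^mu is represented by
  its coefficient function c (with finite support).\<close>

definition mp_supp :: "(nat \<Rightarrow> nat \<Rightarrow> complex) \<Rightarrow> (nat \<times> nat) set" where
  "mp_supp c = {(n, m). c n m \<noteq> 0}"

definition mp_eval :: "(nat \<Rightarrow> nat \<Rightarrow> complex) \<Rightarrow> complex \<Rightarrow> complex \<Rightarrow> complex" where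
  "mp_eval c z w = (\<Sum>(n, m)\<in>mp_supp c. c n m * z ^ n * w ^ m)"

definition mp_fun :: "(nat \<Rightarrow> nat \<Rightarrow> complex) \<Rightarrow> complex \<Rightarrow> complex" where
  "mp_fun c u = mp_eval c u (cnj u)"

definition mp_hpart :: "(nat \<Rightarrow> nat \<Rightarrow> complex) \<Rightarrow> nat \<Rightarrow> complex \<Rightarrow> complex \<Rightarrow> complex" where
  "mp_hpart c l z w = (\<Sum>(n, m)\<in>{(n, m)\<in>mp_supp c. n + m = l}. c n m * z ^ n * w ^ m)"

definition top_deg :: "(nat \<Rightarrow> nat \<Rightarrow> complex) \<Rightarrow> nat" where
  "top_deg c = Max ((\<lambda>(n, m). n + m) ` mp_supp c)"

definition bot_deg :: "(nat \<Rightarrow> nat \<Rightarrow> complex) \<Rightarrow> nat" where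
  "bot_deg c = Min ((\<lambda>(n, m). n + m) ` mp_supp c)"

definition hfactorization ::
  "(nat \<Rightarrow> nat \<Rightarrow> complex) \<Rightarrow> nat \<Rightarrow> complex \<Rightarrow> nat \<Rightarrow> nat \<Rightarrow> complex list \<Rightarrow> nat list \<Rightarrow> bool" where
  "hfactorization c l c0 p q gs ks \<longleftrightarrow>
     c0 \<noteq> 0 \<and> length ks = length gs \<and> distinct gs \<and> (\<forall>g\<in>set gs. g \<noteq> 0) \<and>
     (\<forall>k\<in>set ks. k \<ge> 1) \<and> p + q + sum_list ks = l \<and>
     (\<forall>z w. mp_hpart c l z w = c0 * z ^ p * w ^ q * (\<Prod>j<length gs. (z + gs ! j * w) ^ (ks ! j)))"

definition eps_sign :: "complex \<Rightarrow> int" where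
  "eps_sign x = (if norm x < 1 then 1 else if norm x = 1 then 0 else -1)"

text \<open>p - q + sum_j eps(g_j) k_j; gives beta(f) for the top factorization, rho(f,0) for the bottom one.\<close>
definition fact_index :: "nat \<Rightarrow> nat \<Rightarrow> complex list \<Rightarrow> nat list \<Rightarrow> int" where
  "fact_index p q gs ks = int p - int q + (\<Sum>j<length gs. eps_sign (gs ! j) * int (ks ! j))"

definition mp_zeros :: "(nat \<Rightarrow> nat \<Rightarrow> complex) \<Rightarrow> complex set" where
  "mp_zeros c = {a. mp_fun c a = 0}"

text \<open>Local index sm(f, a): degree of f/|f| on the small counterclockwise circle |u - a| = r,
  i.e. the winding number around 0 of the image of that circle, for all small r > 0.\<close>
definition sm :: "(nat \<Rightarrow> nat \<Rightarrow> complex) \<Rightarrow> complex \<Rightarrow> int" where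
  "sm c a = (THE k::int. eventually (\<lambda>r. winding_number (mp_fun c \<circ> circlepath a r) 0 = of_int k) (at_right 0))"

definition SM :: "(nat \<Rightarrow> nat \<Rightarrow> complex) \<Rightarrow> int" where
  "SM c = (\<Sum>a\<in>mp_zeros c. sm c a)"

end

theory Submission imports Defs begin

text \<open>Dividing a continuous map by \<open>(u - \<alpha>)\<^sup>k\<close> or \<open>cnj (u - \<alpha>)\<^sup>-\<^sup>k\<close>, \<open>k\<close> its local index at
  a zero \<open>\<alpha>\<close>, yields a map that extends without zeros over a small disc around \<open>\<alpha>\<close>; removing
  the zeros one at a time shows that the winding number on a large circle is the sum of the local
  indices. On a large circle, resp. a small circle about \<open>0\<close>, the top, resp. bottom, homogeneous part
  \<open>f\<^sub>l\<close> dominates \<open>f - f\<^sub>l\<close>, so \<open>f\<close> winds like \<open>f\<^sub>l\<close>. In the factorization of \<open>f\<^sub>l\<close>, \<open>u\<close> winds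
  once, \<open>cnj u\<close> minus once, and \<open>u + \<gamma> cnj u\<close> like \<open>u\<close> if \<open>\<bar>\<gamma>\<bar> < 1\<close> and like \<open>\<gamma> cnj u\<close>
  if \<open>\<bar>\<gamma>\<bar> > 1\<close>.\<close>

definition circle_winding :: "(complex \<Rightarrow> complex) \<Rightarrow> complex \<Rightarrow> real \<Rightarrow> complex" where
  "circle_winding g a r = winding_number (g \<circ> circlepath a r) 0"

lemma path_comp_circlepath:
  assumes "continuous_on (sphere a r) g" "0 \<le> r"
  shows "path (g \<circ> circlepath a r)"
  using assms by (intro path_continuous_image) auto

lemma zero_notin_path_image_comp_circlepath:
  assumes "\<forall>x\<in>sphere a r. g x \<noteq> 0" "0 \<le> r"
  shows "0 \<notin> path_image (g \<circ> circlepath a r)"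
  using assms by (auto simp: path_image_compose)

lemma circle_winding_in_Ints:
  assumes "continuous_on (sphere a r) g" "\<forall>x\<in>sphere a r. g x \<noteq> 0" "0 \<le> r"
  shows "circle_winding g a r \<in> \<int>"
  unfolding circle_winding_def using assms
  by (intro integer_winding_number path_comp_circlepath zero_notin_path_image_comp_circlepath)
     (auto simp: pathfinish_compose pathstart_compose)

lemma circle_winding_cong:
  assumes "\<And>x. x \<in> sphere a r \<Longrightarrow> f x = g x" "0 \<le> r"
  shows "circle_winding f a r = circle_winding g a r"
  unfolding circle_winding_def
proof (rule winding_number_cong)
  fix t :: real assume "0 \<le> t" "t \<le> 1"
  then have "circlepath a r t \<in> path_image (circlepath a r)" unfolding path_image_def by auto
  then show "(f \<circ> circlepath a r) t = (g \<circ> circlepath a r) t" using assms by simp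
qed

lemma circle_winding_const: "b \<noteq> 0 \<Longrightarrow> circle_winding (\<lambda>x. b) a r = 0"
  unfolding circle_winding_def by (simp add: o_def winding_number_zero_const)

lemma winding_number_comp_homotopic_loops:
  assumes "homotopic_loops S p q" "continuous_on S g" "\<forall>x\<in>S. g x \<noteq> 0"
  shows "winding_number (g \<circ> p) 0 = winding_number (g \<circ> q) 0"
proof -
  have "homotopic_loops (-{0}) (g \<circ> p) (g \<circ> q)"
    using assms by (intro homotopic_loops_continuous_image) auto
  then show ?thesis by (rule winding_number_homotopic_loops)
qed

lemma circle_winding_eq_0_if_nonvanishing_on_cball:
  assumes "continuous_on (cball a r) g" "\<forall>x\<in>cball a r. g x \<noteq> 0" "0 \<le> r"
  shows "circle_winding g a r = 0"
proof -
  have "homotopic_loops (cball a r) (circlepath a r) (\<lambda>t. a)"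
  proof (rule homotopic_loops_linear)
    fix t :: real assume "t \<in> {0..1}"
    then have "circlepath a r t \<in> cball a r"
      using assms(3) path_image_circlepath_nonneg[of r a] sphere_cball
      unfolding path_image_def by blast
    then show "closed_segment (circlepath a r t) a \<subseteq> cball a r"
      using assms(3) by (intro closed_segment_subset) auto
  qed (auto simp: pathstart_def pathfinish_def circlepath path_def intro!: continuous_intros)
  then have "circle_winding g a r = winding_number (g \<circ> (\<lambda>t. a)) 0"
    unfolding circle_winding_def using assms by (intro winding_number_comp_homotopic_loops) auto
  also have "\<dots> = 0" using assms by (simp add: o_def winding_number_zero_const)
  finally show ?thesis .
qed

lemma circle_winding_annulus_eq:
  assumes "continuous_on S g" "\<forall>x\<in>S. g x \<noteq> 0" "0 < r1" "r1 \<le> r2"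
    and "\<And>x. r1 \<le> dist a x \<Longrightarrow> dist a x \<le> r2 \<Longrightarrow> x \<in> S"
  shows "circle_winding g a r1 = circle_winding g a r2"
proof -
  have "homotopic_loops S (circlepath a r1) (circlepath a r2)"
  proof (rule homotopic_loops_linear)
    fix t :: real assume "t \<in> {0..1}"
    show "closed_segment (circlepath a r1 t) (circlepath a r2 t) \<subseteq> S"
    proof
      fix x assume "x \<in> closed_segment (circlepath a r1 t) (circlepath a r2 t)"
      then obtain u where u: "0 \<le> u" "u \<le> 1"
        and x: "x = (1 - u) *\<^sub>R circlepath a r1 t + u *\<^sub>R circlepath a r2 t"
        unfolding closed_segment_def by auto
      define \<rho> where "\<rho> = (1 - u) * r1 + u * r2"
      have "x - a = of_real \<rho> * exp (2 * of_real pi * \<i> * of_real t)"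
        unfolding x circlepath \<rho>_def by (simp add: scaleR_conv_of_real algebra_simps)
      moreover have "norm (exp (2 * of_real pi * \<i> * of_real t)) = 1"
        by (simp add: norm_exp_eq_Re)
      ultimately have "dist a x = \<bar>\<rho>\<bar>"
        by (metis dist_commute dist_norm norm_mult norm_of_real mult.right_neutral)
      moreover have "r1 \<le> \<rho>" "\<rho> \<le> r2"
        using u assms(3,4) mult_left_mono[of r1 r2 u] mult_left_mono[of r1 r2 "1 - u"]
        unfolding \<rho>_def by (auto simp: algebra_simps)
      ultimately show "x \<in> S" using assms(3) by (intro assms(5)) auto
    qed
  qed (auto simp: pathstart_def pathfinish_def circlepath path_def intro!: continuous_intros)
  then show ?thesis
    unfolding circle_winding_def using assms by (intro winding_number_comp_homotopic_loops) auto
qed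

text \<open>Continuous logarithms of the two loops add up to one of their product.\<close>

lemma winding_number_mult:
  assumes "path p" "path q" "0 \<notin> path_image p" "0 \<notin> path_image q"
  shows "winding_number (\<lambda>t. p t * q t) 0 = winding_number p 0 + winding_number q 0"
proof -
  obtain a where a: "path a" "pathfinish a - pathstart a = 2 * of_real pi * \<i> * winding_number p 0"
    "\<And>t. t \<in> {0..1} \<Longrightarrow> p t = 0 + exp (a t)"
    using winding_number_as_continuous_log[OF assms(1,3)] by blast
  obtain b where b: "path b" "pathfinish b - pathstart b = 2 * of_real pi * \<i> * winding_number q 0"
    "\<And>t. t \<in> {0..1} \<Longrightarrow> q t = 0 + exp (b t)"
    using winding_number_as_continuous_log[OF assms(2,4)] by blast
  have "winding_number (\<lambda>t. p t * q t) 0 = winding_number (exp \<circ> (\<lambda>t. a t + b t)) 0"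
    by (rule winding_number_cong) (simp add: a(3) b(3) exp_add)
  also have "\<dots> = ((pathfinish a - pathstart a) + (pathfinish b - pathstart b)) / (2 * of_real pi * \<i>)"
    using a(1) b(1) by (subst winding_number_compose_exp)
      (auto simp: path_add pathfinish_def pathstart_def algebra_simps)
  also have "\<dots> = winding_number p 0 + winding_number q 0"
    by (simp add: a(2) b(2) field_simps)
  finally show ?thesis .
qed

lemma circle_winding_mult:
  assumes "continuous_on (sphere a r) f" "continuous_on (sphere a r) g" "0 \<le> r"
    "\<forall>x\<in>sphere a r. f x \<noteq> 0" "\<forall>x\<in>sphere a r. g x \<noteq> 0"
  shows "circle_winding (\<lambda>x. f x * g x) a r = circle_winding f a r + circle_winding g a r"
  using winding_number_mult[of "f \<circ> circlepath a r" "g \<circ> circlepath a r"] assms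
  unfolding circle_winding_def
  by (simp add: o_def path_comp_circlepath[unfolded o_def]
      zero_notin_path_image_comp_circlepath[unfolded o_def])

lemma circle_winding_prod:
  fixes n :: nat
  assumes "\<And>j. j < n \<Longrightarrow> continuous_on (sphere a r) (f j)"
    "\<And>j x. j < n \<Longrightarrow> x \<in> sphere a r \<Longrightarrow> f j x \<noteq> 0" "0 \<le> r"
  shows "circle_winding (\<lambda>x. \<Prod>j<n. f j x) a r = (\<Sum>j<n. circle_winding (f j) a r)"
  using assms
proof (induction n)
  case 0
  then show ?case using circle_winding_const[of 1] by simp
next
  case (Suc n)
  have "circle_winding (\<lambda>x. (\<Prod>j<n. f j x) * f n x) a r =
        circle_winding (\<lambda>x. \<Prod>j<n. f j x) a r + circle_winding (f n) a r"
    using Suc.prems by (intro circle_winding_mult continuous_on_prod) auto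
  then show ?case using Suc by simp
qed

lemma circle_winding_power:
  assumes "continuous_on (sphere a r) f" "\<forall>x\<in>sphere a r. f x \<noteq> 0" "0 \<le> r"
  shows "circle_winding (\<lambda>x. f x ^ n) a r = of_nat n * circle_winding f a r"
  using circle_winding_prod[of n a r "\<lambda>_. f"] assms by simp

lemma circle_winding_nearby_eq:
  assumes "continuous_on (sphere a r) f" "continuous_on (sphere a r) g" "0 \<le> r"
    "\<And>x. x \<in> sphere a r \<Longrightarrow> norm (g x - f x) < norm (f x)"
  shows "circle_winding g a r = circle_winding f a r"
  unfolding circle_winding_def
proof (rule winding_number_nearby_loops_eq)
  fix t :: real assume "t \<in> {0..1}"
  then have "circlepath a r t \<in> sphere a r"
    using assms(3) path_image_circlepath_nonneg[of r a] unfolding path_image_def by blast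
  then show "norm ((g \<circ> circlepath a r) t - (f \<circ> circlepath a r) t) < norm ((f \<circ> circlepath a r) t - 0)"
    using assms by simp
qed (use assms in \<open>auto intro: path_comp_circlepath simp: pathfinish_compose pathstart_compose\<close>)

lemma circle_winding_sub:
  assumes "norm (b - a) < r"
  shows "circle_winding (\<lambda>x. x - b) a r = 1"
  using winding_number_circlepath[OF assms]
  by (simp add: circle_winding_def o_def winding_number_offset[symmetric])

lemma circle_winding_cnj_sub:
  assumes "norm (b - a) < r"
  shows "circle_winding (\<lambda>x. cnj (x - b)) a r = -1"
proof -
  let ?p = "\<lambda>t. circlepath a r t - b"
  have "0 < r" using assms by (meson norm_ge_zero le_less_trans)
  then have "\<forall>x\<in>sphere a r. x - b \<noteq> 0" using assms by (auto simp: dist_norm norm_minus_commute)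
  then have p: "path ?p" "0 \<notin> path_image ?p"
    using path_circlepath[of a r] zero_notin_path_image_comp_circlepath[of a r "\<lambda>x. x - b"] \<open>0 < r\<close>
    unfolding path_def by (auto simp: o_def intro!: continuous_intros)
  have "circle_winding (\<lambda>x. cnj (x - b)) a r = winding_number (cnj \<circ> ?p) (cnj 0)"
    by (simp add: circle_winding_def o_def)
  also have "\<dots> = - cnj (winding_number ?p 0)" by (rule winding_number_cnj[OF p])
  also have "winding_number ?p 0 = 1"
    using circle_winding_sub[OF assms] by (simp add: circle_winding_def o_def)
  finally show ?thesis by simp
qed

text \<open>A loop of winding number zero in \<open>-{0}\<close> is null-homotopic, and null-homotopic maps out of
  a circle extend continuously over the disc.\<close>

lemma nonvanishing_extension_to_cball:
  assumes "continuous_on (sphere a r) g" "\<forall>x\<in>sphere a r. g x \<noteq> 0" "0 < r"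
    "circle_winding g a r = 0"
  obtains h where "continuous_on (cball a r) h" "\<forall>x\<in>cball a r. h x \<noteq> 0"
    "\<forall>x\<in>sphere a r. h x = g x"
proof -
  let ?p = "g \<circ> circlepath a r" and ?t = "\<lambda>z. Arg2pi z / (2 * pi)"
  have "path ?p" "0 \<notin> path_image ?p"
    using assms by (intro path_comp_circlepath zero_notin_path_image_comp_circlepath; simp)+
  then obtain k where k: "homotopic_loops (-{0}) ?p (\<lambda>t. k)"
    using winding_number_homotopic_loops_null_eq assms(4) unfolding circle_winding_def by blast
  have eq: "(?p \<circ> ?t) z = g (a + of_real r * z)" if "z \<in> sphere 0 1" for z
  proof -
    have "exp (\<i> * of_real (Arg2pi z)) = z" using that by (simp add: complex_norm_eq_1_exp)
    moreover have "2 * of_real pi * \<i> * of_real (?t z) = \<i> * of_real (Arg2pi z)"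
      by (simp add: field_simps)
    ultimately show ?thesis by (simp add: circlepath)
  qed
  have "homotopic_with_canon (\<lambda>h. True) (sphere 0 1) (-{0}) (\<lambda>z. g (a + of_real r * z)) (\<lambda>z. k)"
    by (rule homotopic_with_eq[OF homotopic_loops_imp_homotopic_circlemaps[OF k]])
       (auto simp: eq[symmetric])
  then obtain G where G: "continuous_on (cball 0 1) G" "G ` cball 0 1 \<subseteq> -{0}"
    "\<forall>x\<in>sphere 0 1. G x = g (a + of_real r * x)"
    using nullhomotopic_from_sphere_extension[of 0 1 "-{0}" "\<lambda>z. g (a + of_real r * z)"] by blast
  have cball: "(x - a) / of_real r \<in> cball 0 1" if "x \<in> cball a r" for x
    using that assms(3) by (auto simp: dist_norm norm_divide norm_minus_commute)
  have sphere: "(x - a) / of_real r \<in> sphere 0 1" if "x \<in> sphere a r" for x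
    using that assms(3) by (auto simp: dist_norm norm_divide norm_minus_commute)
  show ?thesis
  proof
    show "continuous_on (cball a r) (\<lambda>x. G ((x - a) / of_real r))"
      by (rule continuous_on_compose2[OF G(1)]) (use assms(3) in \<open>auto intro!: continuous_intros cball\<close>)
    show "\<forall>x\<in>cball a r. G ((x - a) / of_real r) \<noteq> 0" using G(2) cball by blast
    show "\<forall>x\<in>sphere a r. G ((x - a) / of_real r) = g x" using G(3) sphere assms(3) by simp
  qed
qed

lemma continuous_on_patch_cball:
  assumes "continuous_on (cball a r) h" "continuous_on (S - ball a r) g"
    "\<forall>x\<in>sphere a r. h x = g x" "cball a r \<subseteq> S"
  shows "continuous_on S (\<lambda>x. if x \<in> ball a r then h x else g x)"
proof -
  let ?T = "cball a r \<union> (S - ball a r)"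
  have "S - ball a r = ?T \<inter> - ball a r" using assms(4) by auto
  then have "closedin (top_of_set ?T) (S - ball a r)"
    by (metis closedin_closed_Int open_ball closed_Compl)
  moreover have "closedin (top_of_set ?T) (cball a r)" by (simp add: closed_subset)
  ultimately have "continuous_on ?T (\<lambda>x. if x \<in> ball a r then h x else g x)"
    using assms(1-3) by (intro continuous_on_cases_local) auto
  moreover have "?T = S" using assms(4) by auto
  ultimately show ?thesis by simp
qed

definition local_index :: "(complex \<Rightarrow> complex) \<Rightarrow> complex \<Rightarrow> int" where
  "local_index g a =
     (THE k::int. eventually (\<lambda>r. winding_number (g \<circ> circlepath a r) 0 = of_int k) (at_right 0))"

lemma sm_eq_local_index: "sm c a = local_index (mp_fun c) a"
  by (simp add: sm_def local_index_def)

lemma local_index_eqI: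
  assumes "0 < r0" "\<And>r. 0 < r \<Longrightarrow> r \<le> r0 \<Longrightarrow> circle_winding g a r = of_int k"
  shows "local_index g a = k"
proof -
  have ev: "eventually (\<lambda>r. winding_number (g \<circ> circlepath a r) 0 = of_int k) (at_right 0)"
    unfolding eventually_at_right_field using assms circle_winding_def by (intro exI[of _ r0]) auto
  show ?thesis unfolding local_index_def
  proof (rule the_equality)
    fix j :: int
    assume "eventually (\<lambda>r. winding_number (g \<circ> circlepath a r) 0 = of_int j) (at_right 0)"
    with ev have "eventually (\<lambda>r::real. (of_int j :: complex) = of_int k) (at_right 0)"
      by eventually_elim auto
    then show "j = k" by (simp add: trivial_limit_at_right_real del: of_int_eq_iff) simp
  qed (rule ev)
qed

lemma circle_winding_eq_local_index:
  assumes "continuous_on (cball a r0 - {a}) g" "\<forall>x\<in>cball a r0 - {a}. g x \<noteq> 0" "0 < r" "r \<le> r0"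
  shows "circle_winding g a r = of_int (local_index g a)"
proof -
  have "sphere a r0 \<subseteq> cball a r0 - {a}" using assms(3,4) by auto
  then have "circle_winding g a r0 \<in> \<int>"
    using assms by (intro circle_winding_in_Ints) (auto intro: continuous_on_subset)
  then obtain k where k: "circle_winding g a r0 = of_int k" by (auto elim: Ints_cases)
  have all: "circle_winding g a s = of_int k" if "0 < s" "s \<le> r0" for s
    using that assms k by (subst circle_winding_annulus_eq[OF assms(1,2), of s r0]) (auto simp: dist_commute)
  then have "local_index g a = k" using assms(3,4) by (intro local_index_eqI[of r0]) auto
  then show ?thesis using all assms(3,4) by simp
qed

lemma local_index_mult_nonvanishing:
  assumes "0 < r0" "continuous_on (cball a r0 - {a}) h" "\<forall>x\<in>cball a r0 - {a}. h x \<noteq> 0"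
    "continuous_on (cball a r0) e" "\<forall>x\<in>cball a r0. e x \<noteq> 0"
    "\<forall>x\<in>cball a r0 - {a}. g x = h x * e x"
  shows "local_index g a = local_index h a"
proof (rule local_index_eqI[OF assms(1)])
  fix r assume r: "0 < r" "r \<le> r0"
  then have sphere: "sphere a r \<subseteq> cball a r0 - {a}" by auto
  have "circle_winding g a r = circle_winding (\<lambda>x. h x * e x) a r"
    using r sphere assms(6) by (intro circle_winding_cong) auto
  also have "\<dots> = circle_winding h a r + circle_winding e a r"
    using r sphere assms by (intro circle_winding_mult) (auto intro: continuous_on_subset)
  also have "circle_winding e a r = 0"
    using r assms by (intro circle_winding_eq_0_if_nonvanishing_on_cball) (auto intro: continuous_on_subset)
  also have "circle_winding h a r = of_int (local_index h a)"
    using r assms by (intro circle_winding_eq_local_index) auto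
  finally show "circle_winding g a r = of_int (local_index h a)" by simp
qed

definition signed_power :: "complex \<Rightarrow> int \<Rightarrow> complex \<Rightarrow> complex" where
  "signed_power a k x = (if 0 \<le> k then (x - a) ^ nat k else cnj (x - a) ^ nat (- k))"

lemma continuous_on_signed_power: "continuous_on S (signed_power a k)"
  unfolding signed_power_def by (cases "0 \<le> k") (auto intro!: continuous_intros)

lemma signed_power_nonzero: "x \<noteq> a \<Longrightarrow> signed_power a k x \<noteq> 0"
  unfolding signed_power_def by auto

lemma circle_winding_signed_power:
  assumes "norm (a - b) < r"
  shows "circle_winding (signed_power a k) b r = of_int k"
proof -
  have "0 < r" using assms by (meson norm_ge_zero le_less_trans)
  have nz: "\<forall>x\<in>sphere b r. x - a \<noteq> 0" "\<forall>x\<in>sphere b r. cnj (x - a) \<noteq> 0"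
    using assms by (auto simp: dist_norm norm_minus_commute)
  show ?thesis
  proof (cases "0 \<le> k")
    case True
    have "circle_winding (\<lambda>x. (x - a) ^ nat k) b r = of_nat (nat k) * circle_winding (\<lambda>x. x - a) b r"
      using nz \<open>0 < r\<close> by (intro circle_winding_power) (auto intro!: continuous_intros)
    then show ?thesis using True circle_winding_sub[OF assms] by (simp add: signed_power_def[abs_def])
  next
    case False
    have "circle_winding (\<lambda>x. cnj (x - a) ^ nat (- k)) b r =
          of_nat (nat (- k)) * circle_winding (\<lambda>x. cnj (x - a)) b r"
      using nz \<open>0 < r\<close> by (intro circle_winding_power) (auto intro!: continuous_intros)
    then show ?thesis using False circle_winding_cnj_sub[OF assms] by (simp add: signed_power_def[abs_def])
  qed
qed

lemma divide_out_local_index: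
  assumes "continuous_on (S - {a}) g" "\<forall>x\<in>S - {a}. g x \<noteq> 0" "0 < r" "cball a r \<subseteq> S"
  obtains h where "continuous_on S h" "\<forall>x\<in>S. h x \<noteq> 0"
    "\<forall>x\<in>S - ball a r. g x = h x * signed_power a (local_index g a) x"
proof -
  define e where "e = signed_power a (local_index g a)"
  note that = that[folded e_def]
  define g1 where "g1 x = g x / e x" for x
  have e: "continuous_on T e" "x \<noteq> a \<Longrightarrow> e x \<noteq> 0" for T x
    by (simp_all add: e_def continuous_on_signed_power signed_power_nonzero)
  have g1: "continuous_on (S - {a}) g1" "\<forall>x\<in>S - {a}. g1 x \<noteq> 0"
    unfolding g1_def using assms(1,2) e by (auto intro!: continuous_intros)
  have g_eq: "g x = g1 x * e x" if "x \<noteq> a" for x using e(2)[OF that] by (simp add: g1_def)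
  have sphere: "sphere a r \<subseteq> S - {a}" "cball a r - {a} \<subseteq> S - {a}" using assms(3,4) by auto
  have "of_int (local_index g a) = circle_winding g a r"
    using assms sphere by (intro circle_winding_eq_local_index[symmetric]) (auto intro: continuous_on_subset)
  also have "\<dots> = circle_winding (\<lambda>x. g1 x * e x) a r"
    using assms(3) g_eq by (intro circle_winding_cong) auto
  also have "\<dots> = circle_winding g1 a r + circle_winding e a r"
    using assms(3) sphere g1 e by (intro circle_winding_mult) (auto intro: continuous_on_subset)
  also have "circle_winding e a r = of_int (local_index g a)"
    unfolding e_def using assms(3) by (intro circle_winding_signed_power) simp
  finally have "circle_winding g1 a r = 0" by simp
  then obtain h0 where h0: "continuous_on (cball a r) h0" "\<forall>x\<in>cball a r. h0 x \<noteq> 0"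
    "\<forall>x\<in>sphere a r. h0 x = g1 x"
    using nonvanishing_extension_to_cball[of a r g1] sphere(1) g1 assms(3)
    by (metis continuous_on_subset subsetD)
  show ?thesis
  proof (rule that)
    have "S - ball a r \<subseteq> S - {a}" using assms(3) by auto
    then show "continuous_on S (\<lambda>x. if x \<in> ball a r then h0 x else g1 x)"
      using h0 g1 assms(4) by (intro continuous_on_patch_cball) (auto intro: continuous_on_subset)
    show "\<forall>x\<in>S. (if x \<in> ball a r then h0 x else g1 x) \<noteq> 0"
      using h0(2) g1(2) assms(3) by auto
    show "\<forall>x\<in>S - ball a r. g x = (if x \<in> ball a r then h0 x else g1 x) * e x"
      using g_eq assms(3) by (metis DiffD2 centre_in_ball)
  qed
qed

lemma cball_avoiding_finite:
  assumes "finite F" "b \<notin> F" "open U" "b \<in> U"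
  obtains r where "0 < r" "cball b r \<subseteq> U" "cball b r \<inter> F = {}"
proof -
  have "open (U \<inter> -F)" using assms by (simp add: open_Int open_Compl finite_imp_closed)
  then obtain r where "0 < r" "cball b r \<subseteq> U \<inter> -F" using assms open_contains_cball by blast
  then show ?thesis using that by blast
qed

lemma circle_winding_eq_sum_local_index:
  assumes "finite Z" "Z \<subseteq> ball b R" "0 < R" "continuous_on (-Z) g" "\<forall>x\<in>-Z. g x \<noteq> 0"
  shows "circle_winding g b R = of_int (\<Sum>a\<in>Z. local_index g a)"
  using assms
proof (induction Z arbitrary: g rule: finite_induct)
  case empty
  then show ?case
    by (simp, intro circle_winding_eq_0_if_nonvanishing_on_cball) (auto intro: continuous_on_subset)
next
  case (insert a Z)
  obtain r where r: "0 < r" "cball a r \<subseteq> ball b R" "cball a r \<inter> Z = {}"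
    using cball_avoiding_finite[of Z a "ball b R"] insert by auto
  define e where "e = signed_power a (local_index g a)"
  have Z_a: "-Z - {a} = -insert a Z" by auto
  obtain h where h: "continuous_on (-Z) h" "\<forall>x\<in>-Z. h x \<noteq> 0"
    "\<forall>x\<in>-Z - ball a r. g x = h x * e x"
  proof (rule divide_out_local_index[of "-Z" a g r])
    show "continuous_on (-Z - {a}) g" "\<forall>x\<in>-Z - {a}. g x \<noteq> 0"
      using insert.prems unfolding Z_a by auto
  qed (use r that in \<open>auto simp: e_def\<close>)
  have e: "continuous_on T e" "x \<noteq> a \<Longrightarrow> e x \<noteq> 0" for T x
    by (simp_all add: e_def continuous_on_signed_power signed_power_nonzero)
  have "ball a r \<subseteq> ball b R" using r(2) ball_subset_cball by blast
  then have sphere: "sphere b R \<subseteq> -insert a Z - ball a r" using insert.prems by auto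
  then have e_sphere: "\<forall>x\<in>sphere b R. e x \<noteq> 0" using e(2) by blast
  have "circle_winding g b R = circle_winding (\<lambda>x. h x * e x) b R"
    using sphere h(3) insert.prems by (intro circle_winding_cong) auto
  also have "\<dots> = circle_winding h b R + circle_winding e b R"
    using sphere h e e_sphere insert.prems
    by (intro circle_winding_mult) (auto intro: continuous_on_subset)
  also have "circle_winding e b R = of_int (local_index g a)"
    unfolding e_def using insert.prems
    by (intro circle_winding_signed_power) (simp add: dist_norm norm_minus_commute)
  also have "circle_winding h b R = of_int (\<Sum>z\<in>Z. local_index h z)"
    using insert h by auto
  also have "(\<Sum>z\<in>Z. local_index h z) = (\<Sum>z\<in>Z. local_index g z)"
  proof (rule sum.cong[OF refl])
    fix z assume z: "z \<in> Z"
    have "z \<in> - cball a r" using r(3) z by blast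
    then obtain \<rho> where \<rho>: "0 < \<rho>" "cball z \<rho> \<subseteq> - cball a r"
      "cball z \<rho> \<inter> (insert a Z - {z}) = {}"
      using cball_avoiding_finite[of "insert a Z - {z}" z "- cball a r"] insert.hyps(1) by auto
    then have punctured: "cball z \<rho> - {z} \<subseteq> -Z - ball a r" and "a \<notin> cball z \<rho>"
      using r by auto
    then have "\<forall>x\<in>cball z \<rho>. e x \<noteq> 0" using e(2) by metis
    with punctured show "local_index h z = local_index g z"
      using \<rho> h e by (intro local_index_mult_nonvanishing[where e = e, symmetric])
        (auto intro: continuous_on_subset)
  qed
  finally show ?case using insert.hyps by (simp add: e_def add.commute)
qed

definition hfact_eval ::
    "complex \<Rightarrow> nat \<Rightarrow> nat \<Rightarrow> complex list \<Rightarrow> nat list \<Rightarrow> complex \<Rightarrow> complex" where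
  "hfact_eval c0 p q gs ks u =
     c0 * u ^ p * cnj u ^ q * (\<Prod>j<length gs. (u + gs ! j * cnj u) ^ (ks ! j))"

lemma mp_hpart_eq_hfact_eval:
  "hfactorization c l c0 p q gs ks \<Longrightarrow> mp_hpart c l u (cnj u) = hfact_eval c0 p q gs ks u"
  unfolding hfactorization_def hfact_eval_def by auto

lemma continuous_on_hfact_eval: "continuous_on S (hfact_eval c0 p q gs ks)"
  unfolding hfact_eval_def by (intro continuous_intros)

lemma norm_add_mult_cnj_ge: "\<bar>1 - norm g\<bar> * norm u \<le> norm (u + g * cnj u)"
proof -
  have "norm u - norm (- (g * cnj u)) = (1 - norm g) * norm u" by (simp add: norm_mult algebra_simps)
  then have "\<bar>1 - norm g\<bar> * norm u = \<bar>norm u - norm (- (g * cnj u))\<bar>" by (simp add: abs_mult)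
  also have "\<dots> \<le> norm (u + g * cnj u)" using norm_triangle_ineq3[of u "- (g * cnj u)"] by simp
  finally show ?thesis .
qed

lemma hfact_eval_lower_bound:
  assumes "hfactorization c l c0 p q gs ks" "\<forall>g\<in>set gs. norm g \<noteq> 1"
  obtains K where "0 < K" "\<And>u. K * norm u ^ l \<le> norm (hfact_eval c0 p q gs ks u)"
proof -
  note h = assms(1)[unfolded hfactorization_def]
  define n where "n = length gs"
  define K where "K = norm c0 * (\<Prod>j<n. \<bar>1 - norm (gs ! j)\<bar> ^ (ks ! j))"
  have "\<bar>1 - norm (gs ! j)\<bar> > 0" if "j < n" for j
    using assms(2) that unfolding n_def by (auto simp: nth_mem)
  then have "0 < K" unfolding K_def using h by (intro mult_pos_pos prod_pos) auto
  moreover have "K * norm u ^ l \<le> norm (hfact_eval c0 p q gs ks u)" for u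
  proof -
    have l: "l = p + q + (\<Sum>j<n. ks ! j)"
      using h unfolding n_def by (auto simp: sum_list_sum_nth lessThan_atLeast0)
    have "K * norm u ^ l = norm c0 * norm u ^ p * norm u ^ q *
            (\<Prod>j<n. (\<bar>1 - norm (gs ! j)\<bar> * norm u) ^ (ks ! j))"
      unfolding K_def l by (simp add: power_mult_distrib prod.distrib power_sum power_add)
    also have "\<dots> \<le> norm c0 * norm u ^ p * norm u ^ q * (\<Prod>j<n. norm (u + gs ! j * cnj u) ^ (ks ! j))"
      by (intro mult_left_mono prod_mono conjI power_mono norm_add_mult_cnj_ge) auto
    also have "\<dots> = norm (hfact_eval c0 p q gs ks u)"
      unfolding hfact_eval_def n_def by (simp add: norm_mult norm_power prod_norm[symmetric])
    finally show ?thesis .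
  qed
  ultimately show ?thesis using that by blast
qed

lemma circle_winding_add_mult_cnj:
  assumes "norm g \<noteq> 1" "0 < r"
  shows "circle_winding (\<lambda>u. u + g * cnj u) 0 r = of_int (eps_sign g)"
proof (cases "norm g < 1")
  case True
  have "circle_winding (\<lambda>u. u + g * cnj u) 0 r = circle_winding (\<lambda>u. u - 0) 0 r"
    using True assms(2)
    by (intro circle_winding_nearby_eq) (auto simp: norm_mult intro!: continuous_intros)
  then show ?thesis using True circle_winding_sub[of 0 0 r] assms(2) by (simp add: eps_sign_def)
next
  case False
  then have "1 < norm g" "g \<noteq> 0" using assms(1) by auto
  then have "circle_winding (\<lambda>u. u + g * cnj u) 0 r = circle_winding (\<lambda>u. g * cnj (u - 0)) 0 r"
    using assms(2)
    by (intro circle_winding_nearby_eq) (auto simp: norm_mult intro!: continuous_intros)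
  also have "\<dots> = circle_winding (\<lambda>u. g) 0 r + circle_winding (\<lambda>u. cnj (u - 0)) 0 r"
    using \<open>g \<noteq> 0\<close> assms(2) by (intro circle_winding_mult) (auto intro!: continuous_intros)
  finally show ?thesis
    using \<open>1 < norm g\<close> circle_winding_const[OF \<open>g \<noteq> 0\<close>] circle_winding_cnj_sub[of 0 0 r] assms(2)
    by (simp add: eps_sign_def)
qed

lemma circle_winding_hfact_eval:
  assumes "c0 \<noteq> 0" "\<forall>g\<in>set gs. norm g \<noteq> 1" "0 < r"
  shows "circle_winding (hfact_eval c0 p q gs ks) 0 r = of_int (fact_index p q gs ks)"
proof -
  let ?n = "length gs" and ?l = "\<lambda>j u. u + gs ! j * cnj u"
  have u: "\<forall>u\<in>sphere 0 r. u \<noteq> 0" using assms(3) by auto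
  have nz: "?l j u \<noteq> 0" if "j < ?n" "u \<in> sphere 0 r" for j u
  proof -
    have "0 < \<bar>1 - norm (gs ! j)\<bar> * norm u"
      using that u assms(2) by (intro mult_pos_pos) (auto simp: nth_mem)
    then show ?thesis using norm_add_mult_cnj_ge[of "gs ! j" u] by auto
  qed
  have l: "circle_winding (\<lambda>u. ?l j u ^ (ks ! j)) 0 r = of_nat (ks ! j) * of_int (eps_sign (gs ! j))"
    if "j < ?n" for j
    using that assms nz circle_winding_add_mult_cnj[of "gs ! j" r]
    by (subst circle_winding_power) (auto simp: nth_mem intro!: continuous_intros)
  have "circle_winding (hfact_eval c0 p q gs ks) 0 r =
      circle_winding (\<lambda>u. c0 * u ^ p * cnj u ^ q) 0 r +
      circle_winding (\<lambda>u. \<Prod>j<?n. ?l j u ^ (ks ! j)) 0 r"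
    unfolding hfact_eval_def using assms nz u
    by (intro circle_winding_mult) (auto intro!: continuous_intros)
  also have "circle_winding (\<lambda>u. c0 * u ^ p * cnj u ^ q) 0 r =
      circle_winding (\<lambda>u. c0 * u ^ p) 0 r + circle_winding (\<lambda>u. cnj u ^ q) 0 r"
    using assms u by (intro circle_winding_mult) (auto intro!: continuous_intros)
  also have "circle_winding (\<lambda>u. c0 * u ^ p) 0 r =
      circle_winding (\<lambda>u. c0) 0 r + circle_winding (\<lambda>u. u ^ p) 0 r"
    using assms u by (intro circle_winding_mult) (auto intro!: continuous_intros)
  also have "circle_winding (\<lambda>u. u ^ p) 0 r = of_nat p"
    using assms u circle_winding_power[of 0 r "\<lambda>u. u - 0" p] circle_winding_sub[of 0 0 r] by simp
  also have "circle_winding (\<lambda>u. cnj u ^ q) 0 r = - of_nat q"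
    using assms u circle_winding_power[of 0 r "\<lambda>u. cnj (u - 0)" q] circle_winding_cnj_sub[of 0 0 r]
    by simp
  also have "circle_winding (\<lambda>u. \<Prod>j<?n. ?l j u ^ (ks ! j)) 0 r =
      (\<Sum>j<?n. of_nat (ks ! j) * of_int (eps_sign (gs ! j)))"
    using assms nz l by (subst circle_winding_prod) (auto intro!: continuous_intros)
  finally show ?thesis
    using circle_winding_const[OF assms(1)] by (simp add: fact_index_def mult.commute)
qed

lemma continuous_on_mp_fun: "continuous_on S (mp_fun c)"
  unfolding mp_fun_def mp_eval_def
  by (intro continuous_on_sum) (auto simp: split_def intro!: continuous_intros)

definition mp_rest :: "(nat \<Rightarrow> nat \<Rightarrow> complex) \<Rightarrow> nat \<Rightarrow> complex \<Rightarrow> complex" where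
  "mp_rest c l u = (\<Sum>(n, m)\<in>{(n, m)\<in>mp_supp c. n + m \<noteq> l}. c n m * u ^ n * cnj u ^ m)"

lemma mp_fun_eq_hpart_add_rest:
  assumes "finite (mp_supp c)"
  shows "mp_fun c u = mp_hpart c l u (cnj u) + mp_rest c l u"
proof -
  let ?A = "{(n, m)\<in>mp_supp c. n + m = l}" and ?B = "{(n, m)\<in>mp_supp c. n + m \<noteq> l}"
  have "mp_supp c = ?A \<union> ?B" by auto
  then have "mp_fun c u = (\<Sum>(n, m)\<in>?A \<union> ?B. c n m * u ^ n * cnj u ^ m)"
    unfolding mp_fun_def mp_eval_def by simp
  also have "\<dots> = (\<Sum>(n, m)\<in>?A. c n m * u ^ n * cnj u ^ m) + (\<Sum>(n, m)\<in>?B. c n m * u ^ n * cnj u ^ m)"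
    by (rule sum.union_disjoint) (use assms in \<open>auto intro: finite_subset\<close>)
  finally show ?thesis unfolding mp_hpart_def mp_rest_def .
qed

definition mp_coeff_norm :: "(nat \<Rightarrow> nat \<Rightarrow> complex) \<Rightarrow> real" where
  "mp_coeff_norm c = (\<Sum>(n, m)\<in>mp_supp c. norm (c n m))"

lemma mp_coeff_norm_nonneg: "0 \<le> mp_coeff_norm c"
  unfolding mp_coeff_norm_def by (intro sum_nonneg) (auto simp: split_def)

lemma norm_mp_rest_le:
  assumes "finite (mp_supp c)" "0 \<le> B"
    "\<And>n m. (n, m) \<in> mp_supp c \<Longrightarrow> n + m \<noteq> l \<Longrightarrow> norm u ^ (n + m) \<le> B"
  shows "norm (mp_rest c l u) \<le> mp_coeff_norm c * B"
proof -
  let ?B = "{(n, m)\<in>mp_supp c. n + m \<noteq> l}"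
  have "norm (mp_rest c l u) \<le> (\<Sum>(n, m)\<in>?B. norm (c n m) * norm u ^ (n + m))"
    unfolding mp_rest_def
    by (rule order.trans[OF norm_sum]) (auto simp: split_def norm_mult norm_power power_add mult.assoc)
  also have "\<dots> \<le> (\<Sum>(n, m)\<in>?B. norm (c n m) * B)"
    using assms(3) by (intro sum_mono) (auto intro: mult_left_mono)
  also have "\<dots> \<le> (\<Sum>(n, m)\<in>mp_supp c. norm (c n m) * B)"
    using assms(1,2) by (intro sum_mono2) (auto simp: split_def)
  also have "\<dots> = mp_coeff_norm c * B"
    unfolding mp_coeff_norm_def by (simp add: sum_distrib_right split_def)
  finally show ?thesis .
qed

lemma circle_winding_mp_fun_eq_fact_index:
  assumes "finite (mp_supp c)" "hfactorization c l c0 p q gs ks" "\<forall>g\<in>set gs. norm g \<noteq> 1" "0 < r"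
    "\<And>u. u \<in> sphere 0 r \<Longrightarrow> norm (mp_rest c l u) < norm (hfact_eval c0 p q gs ks u)"
  shows "circle_winding (mp_fun c) 0 r = of_int (fact_index p q gs ks)"
proof -
  have "norm (mp_fun c u - hfact_eval c0 p q gs ks u) < norm (hfact_eval c0 p q gs ks u)"
    if "u \<in> sphere 0 r" for u
    using assms(5)[OF that] mp_fun_eq_hpart_add_rest[OF assms(1), of u l]
      mp_hpart_eq_hfact_eval[OF assms(2)] by simp
  then have "circle_winding (mp_fun c) 0 r = circle_winding (hfact_eval c0 p q gs ks) 0 r"
    using assms(4) by (intro circle_winding_nearby_eq continuous_on_mp_fun continuous_on_hfact_eval) auto
  also have "\<dots> = of_int (fact_index p q gs ks)"
    using assms(2-4) by (intro circle_winding_hfact_eval) (auto simp: hfactorization_def)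
  finally show ?thesis .
qed

lemma norm_mp_rest_top_deg_less:
  assumes fin: "finite (mp_supp c)" and K: "0 < K" and u: "1 + mp_coeff_norm c / K \<le> norm u"
  shows "norm (mp_rest c (top_deg c) u) < K * norm u ^ top_deg c"
proof -
  let ?d = "top_deg c"
  have "0 \<le> mp_coeff_norm c / K" using K mp_coeff_norm_nonneg[of c] by simp
  then have "1 \<le> norm u" "0 < norm u" using u by linarith+
  have "norm u ^ (n + m) \<le> norm u ^ ?d / norm u" if "(n, m) \<in> mp_supp c" "n + m \<noteq> ?d" for n m
  proof -
    have "n + m \<le> ?d" unfolding top_deg_def using fin that(1) by (intro Max_ge) force+
    then have "norm u ^ Suc (n + m) \<le> norm u ^ ?d"
      using that(2) \<open>1 \<le> norm u\<close> by (intro power_increasing) auto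
    then show ?thesis using \<open>0 < norm u\<close> by (simp add: pos_le_divide_eq mult.commute)
  qed
  then have "norm (mp_rest c ?d u) \<le> mp_coeff_norm c * (norm u ^ ?d / norm u)"
    using fin \<open>0 < norm u\<close> by (intro norm_mp_rest_le) auto
  also have "\<dots> < (K * norm u) * (norm u ^ ?d / norm u)"
  proof (rule mult_strict_right_mono)
    show "mp_coeff_norm c < K * norm u"
      using u K by (simp add: field_simps)
  qed (use \<open>0 < norm u\<close> in simp)
  also have "\<dots> = K * norm u ^ ?d" using \<open>0 < norm u\<close> by simp
  finally show ?thesis .
qed

lemma norm_mp_rest_bot_deg_less:
  assumes fin: "finite (mp_supp c)" and K: "0 < K"
    and u: "0 < norm u" "norm u \<le> min 1 (K / (mp_coeff_norm c + 1))"
  shows "norm (mp_rest c (bot_deg c) u) < K * norm u ^ bot_deg c"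
proof -
  let ?d = "bot_deg c"
  have "norm u ^ (n + m) \<le> norm u * norm u ^ ?d" if "(n, m) \<in> mp_supp c" "n + m \<noteq> ?d" for n m
  proof -
    have "?d \<le> n + m" unfolding bot_deg_def using fin that(1) by (intro Min_le) force+
    then show ?thesis using that(2) u power_decreasing[of "Suc ?d" "n + m" "norm u"] by auto
  qed
  then have "norm (mp_rest c ?d u) \<le> (mp_coeff_norm c * norm u) * norm u ^ ?d"
    using fin norm_mp_rest_le[of c "norm u * norm u ^ ?d" ?d u] by (simp add: mult.assoc)
  also have "\<dots> < K * norm u ^ ?d"
  proof (rule mult_strict_right_mono)
    have "mp_coeff_norm c * norm u \<le> mp_coeff_norm c * (K / (mp_coeff_norm c + 1))"
      using u mp_coeff_norm_nonneg[of c] by (intro mult_left_mono) auto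
    also have "\<dots> < K" using K mp_coeff_norm_nonneg[of c] by (simp add: field_simps)
    finally show "mp_coeff_norm c * norm u < K" .
  qed (use u in simp)
  finally show ?thesis .
qed

lemma SM_eq_fact_index_top_deg:
  assumes fin: "finite (mp_supp c)" and hf: "hfactorization c (top_deg c) c0 p q gs ks"
    and adm: "\<forall>g\<in>set gs. norm g \<noteq> 1" and "finite (mp_zeros c)"
  shows "SM c = fact_index p q gs ks"
proof -
  let ?F = "hfact_eval c0 p q gs ks"
  obtain K where K: "0 < K" "\<And>u. K * norm u ^ top_deg c \<le> norm (?F u)"
    using hfact_eval_lower_bound[OF hf adm] by blast
  define R where "R = 1 + mp_coeff_norm c / K"
  have "1 \<le> R" using K mp_coeff_norm_nonneg[of c] by (simp add: R_def)
  have dominated: "norm (mp_rest c (top_deg c) u) < norm (?F u)" if "R \<le> norm u" for u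
    using norm_mp_rest_top_deg_less[OF fin K(1)] K(2)[of u] that unfolding R_def
    by (meson less_le_trans)
  have "mp_zeros c \<subseteq> ball 0 R"
  proof
    fix a assume "a \<in> mp_zeros c"
    then have "?F a = - mp_rest c (top_deg c) a"
      using mp_fun_eq_hpart_add_rest[OF fin, of a "top_deg c"] mp_hpart_eq_hfact_eval[OF hf, of a]
      by (simp add: mp_zeros_def eq_neg_iff_add_eq_0)
    then show "a \<in> ball 0 R" using dominated[of a] by (cases "R \<le> norm a") auto
  qed
  then have "of_int (SM c) = circle_winding (mp_fun c) 0 R"
    unfolding SM_def sm_eq_local_index using assms(4) \<open>1 \<le> R\<close>
    by (intro circle_winding_eq_sum_local_index[symmetric] continuous_on_mp_fun)
       (auto simp: mp_zeros_def)
  also have "\<dots> = of_int (fact_index p q gs ks)"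
    using fin hf adm \<open>1 \<le> R\<close> dominated by (intro circle_winding_mp_fun_eq_fact_index) auto
  finally show ?thesis by simp
qed

lemma sm_0_eq_fact_index_bot_deg:
  assumes fin: "finite (mp_supp c)" and hf: "hfactorization c (bot_deg c) c0 p q gs ks"
    and adm: "\<forall>g\<in>set gs. norm g \<noteq> 1"
  shows "sm c 0 = fact_index p q gs ks"
proof -
  obtain K where K: "0 < K" "\<And>u. K * norm u ^ bot_deg c \<le> norm (hfact_eval c0 p q gs ks u)"
    using hfact_eval_lower_bound[OF hf adm] by blast
  define r0 where "r0 = min 1 (K / (mp_coeff_norm c + 1))"
  have "0 < r0" using K mp_coeff_norm_nonneg[of c] by (simp add: r0_def)
  have "norm (mp_rest c (bot_deg c) u) < norm (hfact_eval c0 p q gs ks u)"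
    if "0 < norm u" "norm u \<le> r0" for u
    using norm_mp_rest_bot_deg_less[OF fin K(1) that[unfolded r0_def]] K(2)[of u] by simp
  then have "local_index (mp_fun c) 0 = fact_index p q gs ks"
    using \<open>0 < r0\<close> fin hf adm
    by (intro local_index_eqI[of r0] circle_winding_mp_fun_eq_fact_index) auto
  then show ?thesis by (simp add: sm_eq_local_index)
qed

theorem theorem12:
  fixes c :: "nat \<Rightarrow> nat \<Rightarrow> complex"
  assumes "finite (mp_supp c)" and "mp_supp c \<noteq> {}"
  shows "(\<forall>c0 p q gs ks. hfactorization c (top_deg c) c0 p q gs ks \<longrightarrow>
           (\<forall>g\<in>set gs. norm g \<noteq> 1) \<longrightarrow> finite (mp_zeros c) \<longrightarrow>
           SM c = fact_index p q gs ks) \<and>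
         (\<forall>c0 a b ds ms. hfactorization c (bot_deg c) c0 a b ds ms \<longrightarrow>
           (\<forall>d\<in>set ds. norm d \<noteq> 1) \<longrightarrow> mp_fun c 0 = 0 \<longrightarrow>
           sm c 0 = fact_index a b ds ms)"
  using SM_eq_fact_index_top_deg[OF assms(1)] sm_0_eq_fact_index_bot_deg[OF assms(1)] by blast

end
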